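(* Let $S$ be a subspace of $\mathbb{R}^n$ and $\mathcal{M}_S=\{A\in\mathbb{R}^{n\times n}: A=A^\intercal,\ \mathrm{range}(A)=S,\ A\succeq0\}$. Then $A\mapsto\log\mathrm{Det}(A)$ is concave on any convex subset of $\mathcal{M}_S$.
   Context: For $A\in\mathbb{R}^{n\times n}$ the pseudo-determinant is $\mathrm{Det}(A)=\lim_{\epsilon\to0}\det(A+\epsilon I)/\epsilon^{n-\mathrm{rank}(A)}$; $\mathrm{range}(A)$ is the column space of $A$. *)

theory Defs
  imports "HOL-Analysis.Analysis"
begin

definition pdet :: "real^'n^'n \<Rightarrow> real" where
  "pdet A = Lim (at (0::real))
     (\<lambda>e. det (A + e *\<^sub>R mat 1) / e ^ (CARD('n) - rank A))"

definition col_space :: "real^'n^'m \<Rightarrow> (real^'m) set" where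
  "col_space A = range (\<lambda>x. A *v x)"

definition M_set :: "(real^'n) set \<Rightarrow> (real^'n^'n) set" where
  "M_set S = {A. transpose A = A \<and> col_space A = S \<and> (\<forall>x. 0 \<le> x \<bullet> (A *v x))}"

end

theory Submission
  imports Defs
begin

(* Every A in M_S is symmetric with kernel the orthogonal complement of S, so the orthogonal
   projection P onto that complement is the same for all of M_S. In an eigenbasis of A,
   A + P has the nonzero eigenvalues of A together with ones in place of the zero eigenvalues,
   hence A + P is positive definite and det (A + P) = Det A. As A \<mapsto> A + P is a translation,
   it suffices that ln det is concave on positive definite matrices; conjugating by X^(-1/2)
   reduces this to X = I, where it is concavity of ln applied to each eigenvalue. *)

lemma inner_matrix_vector_transpose: "(x::real^'n) \<bullet> (A *v y) = (transpose A *v x) \<bullet> y"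
  by (metis dot_lmul_matrix inner_commute vector_transpose_matrix)

lemma symmetric_matrix_inner_commute:
  "transpose A = A \<Longrightarrow> (x::real^'n) \<bullet> (A *v y) = y \<bullet> (A *v x)"
  by (metis inner_matrix_vector_transpose inner_commute)

lemma linear_coeff_zero_if_quadratic_nonpos:
  fixes c d :: real
  assumes "\<And>s. 2 * s * c + s\<^sup>2 * d \<le> 0"
  shows "c = 0"
proof -
  define e where "e = \<bar>d\<bar> + 1"
  have e: "e > 0" "2 * e + d > 0" unfolding e_def by (simp_all add: abs_if)
  have "c\<^sup>2 * (2 * e + d) / e\<^sup>2 = 2 * (c / e) * c + (c / e)\<^sup>2 * d"
    using e by (simp add: field_simps power2_eq_square)
  also have "\<dots> \<le> 0" by (rule assms)
  finally have "c\<^sup>2 * (2 * e + d) \<le> 0" using e by (simp add: divide_le_0_iff)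
  then show ?thesis using e by (simp add: mult_le_0_iff)
qed

lemma rayleigh_maximizer_is_eigenvector:
  fixes A :: "real^'n^'n"
  assumes sym: "transpose A = A" and W: "subspace W" and inv: "\<And>x. x \<in> W \<Longrightarrow> A *v x \<in> W"
    and v: "v \<in> W" "v \<bullet> v = 1"
    and max: "\<And>x. x \<in> W \<Longrightarrow> x \<bullet> (A *v x) \<le> (v \<bullet> (A *v v)) * (x \<bullet> x)"
  shows "A *v v = (v \<bullet> (A *v v)) *\<^sub>R v"
proof -
  define l where "l = v \<bullet> (A *v v)"
  define w where "w = A *v v - l *\<^sub>R v"
  have "w \<in> W" unfolding w_def using inv v W by (simp add: subspace_diff subspace_scale)
  have wv: "w \<bullet> v = 0" unfolding w_def l_def using v
    by (simp add: inner_diff_left inner_commute[of "A *v v" v])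
  \<comment> \<open>maximality of v along the line v + s w kills the linear term in s\<close>
  have "w \<bullet> (A *v v) = 0"
  proof (rule linear_coeff_zero_if_quadratic_nonpos)
    fix s :: real
    have "v + s *\<^sub>R w \<in> W" using v \<open>w \<in> W\<close> W by (simp add: subspace_add subspace_scale)
    then have "(v + s *\<^sub>R w) \<bullet> (A *v (v + s *\<^sub>R w)) \<le> l * ((v + s *\<^sub>R w) \<bullet> (v + s *\<^sub>R w))"
      unfolding l_def by (rule max)
    moreover have "v \<bullet> (A *v w) = w \<bullet> (A *v v)" using symmetric_matrix_inner_commute[OF sym] .
    ultimately show "2 * s * (w \<bullet> (A *v v)) + s\<^sup>2 * (w \<bullet> (A *v w) - l * (w \<bullet> w)) \<le> 0"
      using v wv unfolding l_def
      by (simp add: matrix_vector_right_distrib matrix_vector_mult_scaleR inner_add_left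
          inner_add_right algebra_simps power2_eq_square inner_commute)
  qed
  moreover have "w \<bullet> w = w \<bullet> (A *v v) - l * (w \<bullet> v)"
    by (metis w_def inner_diff_right inner_scaleR_right)
  ultimately have "w \<bullet> w = 0" using wv by simp
  then show ?thesis unfolding w_def l_def by simp
qed

lemma symmetric_invariant_subspace_has_eigenvector:
  fixes A :: "real^'n^'n"
  assumes sym: "transpose A = A" and W: "subspace W" and inv: "\<And>x. x \<in> W \<Longrightarrow> A *v x \<in> W"
    and x: "x \<in> W" "x \<noteq> 0"
  obtains v l where "v \<in> W" "v \<bullet> v = 1" "A *v v = l *\<^sub>R v"
proof -
  define K where "K = W \<inter> sphere 0 1"
  have "x /\<^sub>R norm x \<in> K" using x W unfolding K_def by (simp add: subspace_scale)
  then have "K \<noteq> {}" by auto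
  moreover have "compact K"
    unfolding K_def using W by (intro closed_Int_compact closed_subspace compact_sphere)
  moreover have "continuous_on K (\<lambda>y. y \<bullet> (A *v y))"
    by (intro continuous_intros continuous_on_id linear_continuous_on matrix_vector_mul_linear)
  ultimately obtain v where "v \<in> K" and vmax: "\<And>y. y \<in> K \<Longrightarrow> y \<bullet> (A *v y) \<le> v \<bullet> (A *v v)"
    using continuous_attains_sup by metis
  then have v: "v \<in> W" "v \<bullet> v = 1" unfolding K_def by (auto simp: dot_square_norm)
  have "y \<bullet> (A *v y) \<le> (v \<bullet> (A *v v)) * (y \<bullet> y)" if "y \<in> W" for y
  proof (cases "y = 0")
    case False
    have "y /\<^sub>R norm y \<in> K" unfolding K_def using \<open>y \<in> W\<close> W False by (simp add: subspace_scale)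
    then have "(y \<bullet> (A *v y)) / (y \<bullet> y) \<le> v \<bullet> (A *v v)"
      using vmax[of "y /\<^sub>R norm y"] False
      by (simp add: matrix_vector_mult_scaleR dot_square_norm power2_eq_square field_simps)
    then show ?thesis using False by (simp add: divide_le_eq mult.commute)
  qed simp
  then show ?thesis
    using that[OF v rayleigh_maximizer_is_eigenvector[OF sym W inv v]] by blast
qed

lemma eigenvector_orthogonal_complement_invariant:
  fixes A :: "real^'n^'n"
  assumes sym: "transpose A = A" and W: "subspace W" and inv: "\<And>x. x \<in> W \<Longrightarrow> A *v x \<in> W"
    and v: "v \<in> W" "v \<bullet> v = 1" and eig: "A *v v = l *\<^sub>R v"
  defines "W' \<equiv> {y \<in> W. y \<bullet> v = 0}"
  shows "subspace W'" and "\<And>y. y \<in> W' \<Longrightarrow> A *v y \<in> W'" and "dim W' < dim W"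
proof -
  show "subspace W'" unfolding W'_def subspace_def using W
    by (auto simp: subspace_0 subspace_add subspace_scale inner_add_left)
  show "A *v y \<in> W'" if "y \<in> W'" for y
  proof -
    have "(A *v y) \<bullet> v = y \<bullet> (A *v v)"
      using symmetric_matrix_inner_commute[OF sym, of v y] by (simp add: inner_commute)
    also have "\<dots> = 0" using that eig unfolding W'_def by (simp add: inner_commute)
    finally show ?thesis using that inv unfolding W'_def by auto
  qed
  have "v \<notin> W'" using v unfolding W'_def by simp
  then have "W' \<subset> W" using v unfolding W'_def by blast
  then show "dim W' < dim W" using W \<open>subspace W'\<close> by (metis dim_psubset span_eq_iff)
qed

lemma symmetric_invariant_subspace_orthonormal_eigenbasis:
  fixes A :: "real^'n^'n"
  assumes sym: "transpose A = A"
  shows "subspace W \<Longrightarrow> (\<And>x. x \<in> W \<Longrightarrow> A *v x \<in> W) \<Longrightarrow>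
    \<exists>B. B \<subseteq> W \<and> pairwise orthogonal B \<and> W \<subseteq> span B \<and>
        (\<forall>b\<in>B. norm b = 1 \<and> (\<exists>l. A *v b = l *\<^sub>R b))"
proof (induction "dim W" arbitrary: W rule: less_induct)
  case less
  note W = less.prems(1) and inv = less.prems(2)
  show ?case
  proof (cases "W \<subseteq> {0}")
    case True
    then show ?thesis by (intro exI[of _ "{}"]) auto
  next
    case False
    then obtain x where "x \<in> W" "x \<noteq> 0" by auto
    then obtain v l where v: "v \<in> W" "v \<bullet> v = 1" and eig: "A *v v = l *\<^sub>R v"
      using symmetric_invariant_subspace_has_eigenvector[OF sym W inv] by metis
    define W' where "W' = {y \<in> W. y \<bullet> v = 0}"
    note W' = eigenvector_orthogonal_complement_invariant[OF sym W inv v eig, folded W'_def]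
    obtain B where B: "B \<subseteq> W'" "pairwise orthogonal B" "W' \<subseteq> span B"
       "\<forall>b\<in>B. norm b = 1 \<and> (\<exists>l. A *v b = l *\<^sub>R b)"
      using less.hyps[OF W'(3,1)] W'(2) by blast
    have "W \<subseteq> span (insert v B)"
    proof
      fix y assume "y \<in> W"
      then have "y - (y \<bullet> v) *\<^sub>R v \<in> W'" unfolding W'_def using v W
        by (simp add: subspace_diff subspace_scale inner_diff_left)
      then show "y \<in> span (insert v B)" using B(3) unfolding span_breakdown_eq by blast
    qed
    moreover have "pairwise orthogonal (insert v B)"
      using B(1,2) unfolding pairwise_insert W'_def by (auto simp: orthogonal_def inner_commute)
    moreover have "insert v B \<subseteq> W" using B(1) v unfolding W'_def by auto
    moreover have "norm v = 1" using v by (simp add: norm_eq_1)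
    ultimately show ?thesis using B(4) eig by (intro exI[of _ "insert v B"]) auto
  qed
qed

definition diag_mat :: "('n::finite \<Rightarrow> real) \<Rightarrow> real^'n^'n" where
  "diag_mat d = (\<chi> i j. if i = j then d i else 0)"

lemma diag_mat_mult: "diag_mat a ** diag_mat b = diag_mat (\<lambda>i. a i * b i)"
  by (simp add: diag_mat_def matrix_matrix_mult_def vec_eq_iff if_distrib[of "\<lambda>x. x * _"] cong: if_cong)

lemma diag_mat_add: "diag_mat a + diag_mat b = diag_mat (\<lambda>i. a i + b i)"
  by (simp add: diag_mat_def vec_eq_iff)

lemma scaleR_diag_mat: "c *\<^sub>R diag_mat a = diag_mat (\<lambda>i. c * a i)"
  by (simp add: diag_mat_def vec_eq_iff)

lemma mat_1_eq_diag_mat: "mat 1 = diag_mat (\<lambda>_. 1)"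
  by (simp add: diag_mat_def mat_def vec_eq_iff)

lemma transpose_diag_mat: "transpose (diag_mat a) = diag_mat a"
  by (simp add: diag_mat_def transpose_def vec_eq_iff)

lemma det_diag_mat: "det (diag_mat a) = prod a UNIV"
  by (subst det_diagonal) (auto simp: diag_mat_def)

lemma inner_diag_mat: "(y::real^'n) \<bullet> (diag_mat a *v y) = (\<Sum>i\<in>UNIV. a i * (y $ i)\<^sup>2)"
proof -
  have "diag_mat a *v y = (\<chi> i. a i * y $ i)"
    by (simp add: diag_mat_def matrix_vector_mult_def vec_eq_iff if_distrib[of "\<lambda>x. x * _"] cong: if_cong)
  then show ?thesis by (simp add: inner_vec_def power2_eq_square mult_ac)
qed

lemma rank_diag_mat:
  fixes d :: "'n::finite \<Rightarrow> real"
  shows "rank (diag_mat d) = card {i. d i \<noteq> 0}"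
proof -
  define g where "g j = (d j *\<^sub>R axis j 1 :: real^'n)" for j
  define NZ where "NZ = {i. d i \<noteq> 0}"
  have "column j (diag_mat d) = g j" for j
    by (simp add: column_def g_def diag_mat_def vec_eq_iff axis_def)
  then have "columns (diag_mat d) = range g" unfolding columns_def by auto
  moreover have "span (range g) = span (g ` NZ)"
  proof -
    have "range g \<subseteq> insert 0 (g ` NZ)" by (auto simp: g_def NZ_def)
    then show ?thesis
      by (metis image_mono span_eq span_insert_0 span_superset subset_UNIV subset_trans)
  qed
  moreover have "independent (g ` NZ)"
  proof (rule pairwise_orthogonal_independent)
    show "pairwise orthogonal (g ` NZ)"
      by (auto simp: pairwise_def orthogonal_def g_def inner_axis_axis)
    show "0 \<notin> g ` NZ" by (auto simp: g_def NZ_def axis_eq_0_iff)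
  qed
  moreover have "inj_on g NZ"
    by (auto simp: inj_on_def g_def NZ_def vec_eq_iff axis_def)
  ultimately show ?thesis
    unfolding column_rank_def NZ_def[symmetric]
    by (metis dim_span dim_eq_card_independent card_image)
qed

lemma matrix_add_rdistrib: "((A::real^'n^'m) + B) ** C = A ** C + B ** C"
  by (simp add: matrix_matrix_mult_def vec_eq_iff sum.distrib algebra_simps)

lemma orthogonal_conj_mult:
  assumes "orthogonal_matrix Q"
  shows "(Q ** M ** transpose Q) ** (Q ** N ** transpose Q) = Q ** (M ** N) ** transpose Q"
proof -
  have "transpose Q ** Q = mat 1" using assms by (simp add: orthogonal_matrix_def)
  then show ?thesis by (metis matrix_mul_assoc matrix_mul_rid)
qed

lemma conj_add: "Q ** M ** transpose Q + Q ** N ** transpose Q = Q ** (M + N) ** transpose (Q::real^'n^'n)"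
  by (simp add: matrix_add_ldistrib matrix_add_rdistrib)

lemma conj_scaleR: "c *\<^sub>R (Q ** M ** transpose Q) = Q ** (c *\<^sub>R M) ** transpose (Q::real^'n^'n)"
  by (metis matrix_scalar_ac scalar_matrix_assoc)

lemma orthogonal_conj_mat_1: "orthogonal_matrix (Q::real^'n^'n) \<Longrightarrow> Q ** mat 1 ** transpose Q = mat 1"
  by (simp add: orthogonal_matrix_def)

lemma transpose_conj: "transpose (Q ** M ** transpose Q) = Q ** transpose M ** transpose (Q::real^'n^'m)"
  by (simp add: matrix_transpose_mul matrix_mul_assoc)

lemma det_orthogonal_conj: "orthogonal_matrix (Q::real^'n^'n) \<Longrightarrow> det (Q ** M ** transpose Q) = det M"
  using det_orthogonal_matrix[of Q] by (auto simp: det_mul det_transpose)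

lemma rank_orthogonal_conj:
  assumes "orthogonal_matrix (Q::real^'n^'n)"
  shows "rank (Q ** M ** transpose Q) = rank M"
proof -
  have "transpose Q ** Q = mat 1" using assms by (simp add: orthogonal_matrix_def)
  then have "M = transpose Q ** (Q ** M ** transpose Q) ** Q"
    by (metis matrix_mul_assoc matrix_mul_lid matrix_mul_rid)
  then have "rank M \<le> rank (Q ** M ** transpose Q)"
    by (metis rank_mul_le_left rank_mul_le_right order_trans)
  moreover have "rank (Q ** M ** transpose Q) \<le> rank M"
    by (metis rank_mul_le_left rank_mul_le_right order_trans)
  ultimately show ?thesis by simp
qed

lemma inner_conj:
  "(x::real^'n) \<bullet> ((Q ** M ** transpose Q) *v x) = (transpose Q *v x) \<bullet> (M *v (transpose Q *v x))"
  by (simp add: matrix_vector_mul_assoc[symmetric] inner_matrix_vector_transpose[of x Q]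
      del: transpose_matrix_vector)

lemma scaleR_mat_1_add_conj_diag_mat:
  assumes "orthogonal_matrix Q"
  shows "c *\<^sub>R mat 1 + Q ** diag_mat d ** transpose Q = Q ** diag_mat (\<lambda>i. c + d i) ** transpose Q"
proof -
  have "c *\<^sub>R mat 1 = Q ** diag_mat (\<lambda>_. c) ** transpose Q"
    using conj_scaleR[of c Q "mat 1"] orthogonal_conj_mat_1[OF assms]
    by (simp add: mat_1_eq_diag_mat scaleR_diag_mat)
  then show ?thesis by (simp add: conj_add diag_mat_add)
qed

theorem symmetric_matrix_spectral:
  fixes A :: "real^'n^'n"
  assumes sym: "transpose A = A"
  obtains Q d where "orthogonal_matrix Q" "A = Q ** diag_mat d ** transpose Q"
proof -
  obtain B where B: "pairwise orthogonal B" "UNIV \<subseteq> span B"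
      "\<forall>b\<in>B. norm b = 1 \<and> (\<exists>l. A *v b = l *\<^sub>R b)"
    using symmetric_invariant_subspace_orthonormal_eigenbasis[OF sym, of UNIV] by auto
  have "0 \<notin> B" using B(3) norm_zero by (metis zero_neq_one)
  then have "independent B" using B(1) pairwise_orthogonal_independent by blast
  then have "finite B" and "dim B = card B"
    by (simp_all add: finiteI_independent dim_eq_card_independent)
  moreover have "dim B = dim (UNIV :: (real^'n) set)"
    by (metis B(2) dim_span top.extremum_uniqueI)
  ultimately have "card B = CARD('n)" by simp
  then obtain f where f: "bij_betw f (UNIV::'n set) B"
    using \<open>finite B\<close> finite_same_card_bij[of "UNIV::'n set" B] by auto
  then have fB: "f j \<in> B" and finj: "i \<noteq> j \<Longrightarrow> f i \<noteq> f j" for i j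
    by (auto simp: bij_betw_def inj_on_def)
  have "\<forall>j. \<exists>l. A *v f j = l *\<^sub>R f j" using B(3) fB by blast
  then obtain lam where lam: "\<And>j. A *v f j = lam j *\<^sub>R f j" by metis
  define Q :: "real^'n^'n" where "Q = (\<chi> i j. f j $ i)"
  have "column j Q = f j" for j unfolding Q_def column_def by (simp add: vec_eq_iff)
  then have Q: "orthogonal_matrix Q"
    unfolding orthogonal_matrix_orthonormal_columns using B fB finj by (auto simp: pairwise_def)
  have "(A ** Q) $ i $ j = (Q ** diag_mat lam) $ i $ j" for i j
  proof -
    have "(A ** Q) $ i $ j = (A *v f j) $ i"
      by (simp add: matrix_matrix_mult_def matrix_vector_mult_def Q_def)
    also have "\<dots> = (Q ** diag_mat lam) $ i $ j"
      by (simp add: lam matrix_matrix_mult_def diag_mat_def Q_def if_distrib[of "\<lambda>x. _ * x"] cong: if_cong)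
    finally show ?thesis .
  qed
  then have "A ** Q = Q ** diag_mat lam" by (simp add: vec_eq_iff)
  then have "A = Q ** diag_mat lam ** transpose Q"
    using Q by (metis matrix_mul_assoc matrix_mul_rid orthogonal_matrix_def)
  with Q that show ?thesis by blast
qed

lemma inner_conj_diag_mat_axis:
  assumes "orthogonal_matrix Q"
  shows "(Q *v axis i 1) \<bullet> ((Q ** diag_mat d ** transpose Q) *v (Q *v axis i 1)) = d i"
proof -
  have "transpose Q *v (Q *v axis i 1) = axis i 1"
    using assms by (simp add: matrix_vector_mul_assoc orthogonal_matrix_def del: transpose_matrix_vector)
  then show ?thesis
    by (simp add: inner_conj inner_diag_mat axis_def power2_eq_square if_distrib[of "\<lambda>x. _ * x"]
        cong: if_cong del: transpose_matrix_vector)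
qed

definition pos_def :: "real^'n^'n \<Rightarrow> bool" where
  "pos_def X \<longleftrightarrow> transpose X = X \<and> (\<forall>x. x \<noteq> 0 \<longrightarrow> 0 < x \<bullet> (X *v x))"

lemma pos_def_conj_diag_mat_iff:
  assumes Q: "orthogonal_matrix Q"
  shows "pos_def (Q ** diag_mat d ** transpose Q) \<longleftrightarrow> (\<forall>i. 0 < d i)"
proof
  assume "pos_def (Q ** diag_mat d ** transpose Q)"
  moreover have "Q *v axis i 1 \<noteq> 0" for i
    using Q by (metis axis_eq_0_iff matrix_vector_mul_assoc matrix_vector_mul_lid
        orthogonal_matrix_def zero_neq_one matrix_vector_mult_0_right)
  ultimately show "\<forall>i. 0 < d i"
    unfolding pos_def_def using inner_conj_diag_mat_axis[OF Q] by metis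
next
  assume d: "\<forall>i. 0 < d i"
  have "0 < x \<bullet> ((Q ** diag_mat d ** transpose Q) *v x)" if "x \<noteq> 0" for x
  proof -
    define y where "y = transpose Q *v x"
    have "y \<noteq> 0"
      using Q that unfolding y_def
      by (metis matrix_vector_mul_assoc matrix_vector_mul_lid orthogonal_matrix_def
          matrix_vector_mult_0_right)
    then obtain j where "y $ j \<noteq> 0" by (auto simp: vec_eq_iff)
    then have "0 < d j * (y $ j)\<^sup>2" using d by simp
    also have "\<dots> \<le> (\<Sum>i\<in>UNIV. d i * (y $ i)\<^sup>2)"
      by (rule member_le_sum) (use d in \<open>auto intro!: mult_nonneg_nonneg simp: less_imp_le\<close>)
    finally show ?thesis by (simp add: inner_conj inner_diag_mat y_def del: transpose_matrix_vector)
  qed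
  then show "pos_def (Q ** diag_mat d ** transpose Q)"
    unfolding pos_def_def by (simp add: transpose_conj transpose_diag_mat)
qed

lemma pos_def_det_pos:
  assumes "pos_def X"
  shows "0 < det X"
proof -
  obtain Q d where Q: "orthogonal_matrix Q" and X: "X = Q ** diag_mat d ** transpose Q"
    using symmetric_matrix_spectral assms unfolding pos_def_def by blast
  then have "\<forall>i. 0 < d i" using assms pos_def_conj_diag_mat_iff by blast
  then show ?thesis by (simp add: X det_orthogonal_conj[OF Q] det_diag_mat prod_pos)
qed

lemma pos_def_congruence:
  fixes M :: "real^'n^'n"
  assumes Y: "pos_def Y" and M: "invertible M"
  shows "pos_def (transpose M ** Y ** M)"
  unfolding pos_def_def
proof (intro conjI allI impI)
  show "transpose (transpose M ** Y ** M) = transpose M ** Y ** M"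
    using Y by (simp add: pos_def_def matrix_transpose_mul matrix_mul_assoc)
  fix x :: "real^'n" assume "x \<noteq> 0"
  then have "M *v x \<noteq> 0" using inj_matrix_vector_mult[OF M] by (metis injD matrix_vector_mult_0_right)
  then have "0 < (M *v x) \<bullet> (Y *v (M *v x))" using Y by (simp add: pos_def_def)
  then show "0 < x \<bullet> ((transpose M ** Y ** M) *v x)"
    by (simp add: matrix_vector_mul_assoc[symmetric] inner_matrix_vector_transpose[of x "transpose M"]
        del: transpose_matrix_vector)
qed

lemma transpose_add: "transpose (A + B) = transpose A + transpose (B::real^'n^'m)"
  by (simp add: transpose_def vec_eq_iff)

lemma convex_pos_def: "convex {X :: real^'n^'n. pos_def X}"
proof (rule convexI, clarsimp)
  fix X Y :: "real^'n^'n" and u v :: real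
  assume X: "pos_def X" and Y: "pos_def Y" and uv: "0 \<le> u" "0 \<le> v" "u + v = 1"
  have "0 < x \<bullet> ((u *\<^sub>R X + v *\<^sub>R Y) *v x)" if "x \<noteq> 0" for x
  proof -
    have "0 < x \<bullet> (X *v x)" "0 < x \<bullet> (Y *v x)" using X Y that by (auto simp: pos_def_def)
    moreover have "x \<bullet> ((u *\<^sub>R X + v *\<^sub>R Y) *v x) = u * (x \<bullet> (X *v x)) + v * (x \<bullet> (Y *v x))"
      by (simp add: matrix_vector_mult_add_rdistrib scaleR_matrix_vector_assoc[symmetric] inner_add_right)
    ultimately show ?thesis using uv
      by (smt (verit) mult_pos_pos mult_nonneg_nonneg)
  qed
  then show "pos_def (u *\<^sub>R X + v *\<^sub>R Y)"
    using X Y by (simp add: pos_def_def transpose_add transpose_scalar)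
qed

lemma pos_def_inverse_sqrt:
  assumes "pos_def X"
  obtains R where "transpose R = R" "R ** X ** R = mat 1"
proof -
  obtain Q a where Q: "orthogonal_matrix Q" and X: "X = Q ** diag_mat a ** transpose Q"
    using symmetric_matrix_spectral assms unfolding pos_def_def by blast
  then have a: "\<forall>i. 0 < a i" using assms pos_def_conj_diag_mat_iff by blast
  define R where "R = Q ** diag_mat (\<lambda>i. 1 / sqrt (a i)) ** transpose Q"
  have "diag_mat (\<lambda>i. 1 / sqrt (a i)) ** diag_mat a ** diag_mat (\<lambda>i. 1 / sqrt (a i)) = mat 1"
    unfolding diag_mat_mult mat_1_eq_diag_mat
    by (rule arg_cong[where f = diag_mat])
       (use a in \<open>simp add: fun_eq_iff field_simps abs_of_pos less_imp_neq[symmetric]\<close>)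
  then have "R ** X ** R = mat 1"
    unfolding R_def X orthogonal_conj_mult[OF Q] using orthogonal_conj_mat_1[OF Q] by simp
  moreover have "transpose R = R" unfolding R_def by (simp add: transpose_conj transpose_diag_mat)
  ultimately show ?thesis using that by blast
qed

lemma ln_det_mix_mat_1_ge:
  assumes Z: "pos_def Z" and st: "0 \<le> s" "0 \<le> t" "s + t = 1"
  shows "t * ln (det Z) \<le> ln (det (s *\<^sub>R mat 1 + t *\<^sub>R Z))"
proof -
  obtain Q e where Q: "orthogonal_matrix Q" and Ze: "Z = Q ** diag_mat e ** transpose Q"
    using symmetric_matrix_spectral Z unfolding pos_def_def by blast
  then have e: "0 < e i" for i using Z pos_def_conj_diag_mat_iff by blast
  have "0 < s + t * e i" for i
    using st e[of i] by (cases "s = 0") (simp_all add: add_pos_nonneg)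
  have "s *\<^sub>R mat 1 + t *\<^sub>R Z = Q ** diag_mat (\<lambda>i. s + t * e i) ** transpose Q"
    using scaleR_mat_1_add_conj_diag_mat[OF Q, of s "\<lambda>i. t * e i"]
    unfolding Ze conj_scaleR scaleR_diag_mat .
  then have "ln (det (s *\<^sub>R mat 1 + t *\<^sub>R Z)) = (\<Sum>i\<in>UNIV. ln (s + t * e i))"
    using \<open>\<And>i. 0 < s + t * e i\<close>
    by (simp add: det_orthogonal_conj[OF Q] det_diag_mat ln_prod less_imp_neq[symmetric])
  moreover have "ln (det Z) = (\<Sum>i\<in>UNIV. ln (e i))"
    using e by (simp add: Ze det_orthogonal_conj[OF Q] det_diag_mat ln_prod less_imp_neq[symmetric])
  moreover have "t * ln (e i) \<le> ln (s + t * e i)" for i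
  proof -
    have "t \<le> 1" "s = 1 - t" using st by simp_all
    with concave_onD[OF ln_concave, of t 1 "e i"] e[of i] st(2) show ?thesis by simp
  qed
  ultimately show ?thesis by (simp add: sum_distrib_left sum_mono)
qed

lemma sandwich_scaleR_add:
  "R ** (s *\<^sub>R X + t *\<^sub>R Y) ** R = s *\<^sub>R (R ** X ** R) + t *\<^sub>R (R ** Y ** (R::real^'n^'n))"
  by (simp add: matrix_add_ldistrib matrix_add_rdistrib matrix_scalar_ac scalar_matrix_assoc)

theorem concave_on_ln_det: "concave_on {X :: real^'n^'n. pos_def X} (\<lambda>X. ln (det X))"
  unfolding concave_on_iff
proof (intro conjI ballI allI impI)
  show "convex {X :: real^'n^'n. pos_def X}" by (rule convex_pos_def)
  fix X Y :: "real^'n^'n" and s t :: real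
  assume "X \<in> {X. pos_def X}" "Y \<in> {X. pos_def X}" and st: "0 \<le> s" "0 \<le> t" "s + t = 1"
  then have X: "pos_def X" and Y: "pos_def Y" by simp_all
  have XY: "pos_def (s *\<^sub>R X + t *\<^sub>R Y)" using convexD[OF convex_pos_def] X Y st by blast
  obtain R where R: "transpose R = R" "R ** X ** R = mat 1" using pos_def_inverse_sqrt X by blast
  define D where "D = det R * det R"
  have D: "D * det M = det (R ** M ** R)" for M unfolding D_def by (simp add: det_mul)
  have DX: "D * det X = 1" using D[of X] R(2) by simp
  then have "det R \<noteq> 0" unfolding D_def by auto
  then have "0 < D" unfolding D_def using not_real_square_gt_zero by blast
  define Z where "Z = R ** Y ** R"
  have Z: "pos_def Z"
    using pos_def_congruence[OF Y, of R] \<open>det R \<noteq> 0\<close> R(1) by (simp add: Z_def invertible_det_nz)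
  have lnD: "ln (D * det M) = ln D + ln (det M)" if "pos_def M" for M
    using \<open>0 < D\<close> pos_def_det_pos[OF that] by (simp add: ln_mult)
  have lnXY: "ln (det X) = - ln D" "ln (det Y) = ln (det Z) - ln D"
    using lnD[OF X] lnD[OF Y] DX by (simp_all add: D Z_def)
  have "s * ln (det X) + t * ln (det Y) = t * ln (det Z) - (s + t) * ln D"
    unfolding lnXY by (simp add: algebra_simps)
  also have "\<dots> = t * ln (det Z) - ln D" using st(3) by simp
  also have "\<dots> \<le> ln (det (s *\<^sub>R mat 1 + t *\<^sub>R Z)) - ln D"
    using ln_det_mix_mat_1_ge[OF Z st] by simp
  also have "\<dots> = ln (det (s *\<^sub>R X + t *\<^sub>R Y))"
    using lnD[OF XY] by (simp add: D sandwich_scaleR_add R(2) Z_def)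
  finally show "s * ln (det X) + t * ln (det Y) \<le> ln (det (s *\<^sub>R X + t *\<^sub>R Y))" .
qed

lemma pdet_conj_diag_mat:
  fixes d :: "'n::finite \<Rightarrow> real"
  assumes Q: "orthogonal_matrix Q"
  shows "pdet (Q ** diag_mat d ** transpose Q) = prod d {i. d i \<noteq> 0}"
proof -
  define A where "A = Q ** diag_mat d ** transpose Q"
  define NZ where "NZ = {i. d i \<noteq> 0}"
  have "CARD('n) - rank A = card (- NZ)"
    unfolding A_def rank_orthogonal_conj[OF Q] rank_diag_mat NZ_def[symmetric]
    by (simp add: Compl_eq_Diff_UNIV card_Diff_subset)
  then have eq: "det (A + e *\<^sub>R mat 1) / e ^ (CARD('n) - rank A) = (\<Prod>i\<in>NZ. d i + e)"
    if "e \<noteq> 0" for e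
  proof -
    have "A + e *\<^sub>R mat 1 = Q ** diag_mat (\<lambda>i. d i + e) ** transpose Q"
      using scaleR_mat_1_add_conj_diag_mat[OF Q, of e d] unfolding A_def by (simp add: add.commute)
    then have "det (A + e *\<^sub>R mat 1) = (\<Prod>i\<in>NZ. d i + e) * (\<Prod>i\<in>-NZ. d i + e)"
      by (simp add: det_orthogonal_conj[OF Q] det_diag_mat prod.union_disjoint[symmetric])
    also have "(\<Prod>i\<in>-NZ. d i + e) = e ^ card (- NZ)" by (simp add: NZ_def)
    finally show ?thesis using that \<open>CARD('n) - rank A = card (- NZ)\<close> by simp
  qed
  have "((\<lambda>e. \<Prod>i\<in>NZ. d i + e) \<longlongrightarrow> (\<Prod>i\<in>NZ. d i + 0)) (at (0::real))"
    by (intro tendsto_intros)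
  moreover have "\<forall>\<^sub>F e in at 0. (\<Prod>i\<in>NZ. d i + e) = det (A + e *\<^sub>R mat 1) / e ^ (CARD('n) - rank A)"
    by (auto simp: eventually_at_filter eq)
  ultimately have "((\<lambda>e. det (A + e *\<^sub>R mat 1) / e ^ (CARD('n) - rank A)) \<longlongrightarrow> prod d NZ) (at 0)"
    by (simp add: Lim_transform_eventually)
  then show ?thesis unfolding pdet_def A_def NZ_def by (intro tendsto_Lim trivial_limit_at)
qed

definition perp_projection :: "(real^'n) set \<Rightarrow> real^'n^'n \<Rightarrow> bool" where
  "perp_projection S P \<longleftrightarrow> transpose P = P \<and> (\<forall>x\<in>S. P *v x = 0) \<and> (\<forall>x. x - P *v x \<in> S)"

lemma perp_projection_unique:
  assumes "perp_projection S P1" "perp_projection S P2"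
  shows "P1 = P2"
proof -
  have absorb: "P' ** P = P'" if "perp_projection S P" "perp_projection S P'" for P P'
  proof -
    have "P' *v (x - P *v x) = 0" for x using that unfolding perp_projection_def by blast
    then have "P' *v x = (P' ** P) *v x" for x
      by (simp add: matrix_vector_mult_diff_distrib matrix_vector_mul_assoc)
    then show ?thesis by (simp add: matrix_eq)
  qed
  have "P1 = transpose (P1 ** P2)" using absorb[OF assms(2,1)] assms(1)
    by (simp add: perp_projection_def)
  also have "\<dots> = P2" using absorb[OF assms] assms
    by (simp add: matrix_transpose_mul perp_projection_def)
  finally show ?thesis .
qed

lemma perp_projection_conj_diag_mat:
  fixes d :: "'n::finite \<Rightarrow> real"
  assumes Q: "orthogonal_matrix Q"
  shows "perp_projection (col_space (Q ** diag_mat d ** transpose Q))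
           (Q ** diag_mat (\<lambda>i. if d i = 0 then 1 else 0) ** transpose Q)"
proof -
  define A where "A = Q ** diag_mat d ** transpose Q"
  define P where "P = Q ** diag_mat (\<lambda>i. if d i = 0 then 1 else 0) ** transpose Q"
  define A' where "A' = Q ** diag_mat (\<lambda>i. if d i = 0 then 0 else 1 / d i) ** transpose Q"
  have "P ** A = Q ** diag_mat (\<lambda>_. 0) ** transpose Q"
    unfolding P_def A_def orthogonal_conj_mult[OF Q] diag_mat_mult
    by (rule arg_cong[where f = "\<lambda>D. Q ** diag_mat D ** transpose Q"]) auto
  moreover have "diag_mat (\<lambda>_. 0) = (0::real^'n^'n)" by (simp add: diag_mat_def vec_eq_iff)
  ultimately have PA: "P ** A = 0" by simp
  have "A ** A' + P = Q ** mat 1 ** transpose Q"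
    unfolding P_def A_def A'_def orthogonal_conj_mult[OF Q] diag_mat_mult conj_add diag_mat_add
      mat_1_eq_diag_mat
    by (rule arg_cong[where f = "\<lambda>D. Q ** diag_mat D ** transpose Q"]) auto
  then have AA': "A ** A' + P = mat 1" by (simp only: orthogonal_conj_mat_1[OF Q])
  have "P *v x = 0" if "x \<in> col_space A" for x
    using that PA unfolding col_space_def by (auto simp: matrix_vector_mul_assoc)
  moreover have "x - P *v x \<in> col_space A" for x
  proof -
    have "x = A *v (A' *v x) + P *v x"
      using AA' by (metis matrix_vector_mul_assoc matrix_vector_mul_lid matrix_vector_mult_add_rdistrib)
    then show ?thesis unfolding col_space_def by (metis add_diff_cancel_right' rangeI)
  qed
  moreover have "transpose P = P" unfolding P_def by (simp add: transpose_conj transpose_diag_mat)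
  ultimately show ?thesis unfolding perp_projection_def A_def P_def by blast
qed

lemma M_set_add_perp_projection:
  assumes A: "A \<in> M_set S" and P: "perp_projection S P"
  shows "pdet A = det (A + P)" and "pos_def (A + P)"
proof -
  have sym: "transpose A = A" and colA: "col_space A = S" and psd: "\<And>x. 0 \<le> x \<bullet> (A *v x)"
    using A unfolding M_set_def by auto
  obtain Q d where Q: "orthogonal_matrix Q" and Ad: "A = Q ** diag_mat d ** transpose Q"
    using symmetric_matrix_spectral[OF sym] by blast
  define z where "z i = (if d i = 0 then 1 else 0 :: real)" for i
  have "P = Q ** diag_mat z ** transpose Q"
    using perp_projection_unique[OF P] perp_projection_conj_diag_mat[OF Q, of d] colA
    unfolding Ad z_def by simp
  then have AP: "A + P = Q ** diag_mat (\<lambda>i. d i + z i) ** transpose Q"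
    unfolding Ad by (simp add: conj_add diag_mat_add)
  have "0 \<le> d i" for i using psd inner_conj_diag_mat_axis[OF Q, of i d] unfolding Ad by metis
  then have dz: "0 < d i + z i" for i unfolding z_def by (simp add: less_le)
  then show "pos_def (A + P)" unfolding AP pos_def_conj_diag_mat_iff[OF Q] by blast
  have "pdet A = prod d {i. d i \<noteq> 0}" unfolding Ad by (rule pdet_conj_diag_mat[OF Q])
  also have "\<dots> = (\<Prod>i\<in>UNIV. d i + z i)"
    by (rule prod.mono_neutral_cong_left) (auto simp: z_def)
  also have "\<dots> = det (A + P)" unfolding AP by (simp add: det_orthogonal_conj[OF Q] det_diag_mat)
  finally show "pdet A = det (A + P)" .
qed

lemma M_set_perp_projection_exists:
  assumes "A \<in> M_set S"
  obtains P where "perp_projection S P"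
proof -
  have "transpose A = A" and "col_space A = S" using assms unfolding M_set_def by auto
  moreover obtain Q d where "orthogonal_matrix Q" "A = Q ** diag_mat d ** transpose Q"
    using symmetric_matrix_spectral \<open>transpose A = A\<close> by blast
  ultimately show ?thesis using perp_projection_conj_diag_mat that by blast
qed

lemma concave_on_translation:
  assumes f: "concave_on T f" and C: "convex C"
    and CT: "\<And>x. x \<in> C \<Longrightarrow> x + a \<in> T" and g: "\<And>x. x \<in> C \<Longrightarrow> g x = f (x + a)"
  shows "concave_on C g"
  unfolding concave_on_iff
proof (intro conjI ballI allI impI)
  fix x y and u v :: real
  assume xy: "x \<in> C" "y \<in> C" and uv: "0 \<le> u" "0 \<le> v" "u + v = 1"
  have "u *\<^sub>R x + v *\<^sub>R y + a = u *\<^sub>R (x + a) + v *\<^sub>R (y + a)"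
    using uv(3) by (simp add: algebra_simps flip: scaleR_add_left)
  moreover have "u *\<^sub>R x + v *\<^sub>R y \<in> C" using convexD[OF C xy uv] .
  moreover have "u * f (x + a) + v * f (y + a) \<le> f (u *\<^sub>R (x + a) + v *\<^sub>R (y + a))"
    using f CT xy uv unfolding concave_on_iff by blast
  ultimately show "u * g x + v * g y \<le> g (u *\<^sub>R x + v *\<^sub>R y)" using g xy by simp
qed (rule C)

theorem lemma3:
  fixes S :: "(real^'n) set" and C :: "(real^'n^'n) set"
  assumes "subspace S"
    and "C \<subseteq> M_set S"
    and "convex C"
  shows "concave_on C (\<lambda>A. ln (pdet A))"
proof (cases "C = {}")
  case True
  then show ?thesis by (simp add: concave_on_iff)
next
  case False
  then obtain A0 where "A0 \<in> M_set S" using assms(2) by blast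
  then obtain P where P: "perp_projection S P" by (rule M_set_perp_projection_exists)
  show ?thesis
  proof (rule concave_on_translation[OF concave_on_ln_det assms(3)])
    fix A assume "A \<in> C"
    then have "A \<in> M_set S" using assms(2) by blast
    then show "A + P \<in> {X. pos_def X}" and "ln (pdet A) = ln (det (A + P))"
      using M_set_add_perp_projection[OF _ P] by simp_all
  qed
qed

end
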